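(* Let $\varepsilon>0$, let $\widetilde M_f,\widetilde M_g$ be as in the context, and let $\varphi:\widetilde M_f\to\widetilde M_g$ be the continuous map $\varphi=\phi_1\cup\cdots\cup\phi_{\eta_f}$ obtained from a leaf assignment whose path extensions agree pairwise at least common ancestors of leaves. For each pair of distinct leaves $(u_i,u_j)$ of $\widetilde M_f$ let $v=\mathrm{LCA}(u_i,u_j)$ and let $P_i,P_j$ be their leaf-to-root paths. Traversing downward from $v$ along $P_i$ and $P_j$, let $u_r\in P_i$ and $u_s\in P_j$ be the first pair of nodes such that (i) $\tilde f(u_r)=\tilde f(u_s)$ and (ii) $\tilde f(v)-\tilde f(u_r)>2\varepsilon$ (the $2\varepsilon$-pair of $(u_i,u_j)$, if it exists). Then $\varphi$ satisfies the Ancestor-Shift property (for all $x_1,x_2\in\widetilde M_f$, $\varphi(x_1)\succeq\varphi(x_2)$ implies $i^{2\varepsilon}(x_1)\succeq i^{2\varepsilon}(x_2)$) if and only if $\varphi(u_r)\neq\varphi(u_s)$ for every pair of distinct leaves $(u_i,u_j)$ of $\widetilde M_f$, where for a leaf pair whose $2\varepsilon$-pair does not exist the condition is regarded as satisfied.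
   Context: A finite merge tree is a finite rooted tree regarded as a topological space, with a continuous height function strictly increasing along each edge toward the root. Let $M_f$ (height $\tilde f$, root $r_f$) and $M_g$ (height $\tilde g$, root $r_g$) be finite merge trees with $\tilde g(r_g)=\tilde f(r_f)+\varepsilon$. Let $H=\{\tilde f(u): u \text{ a node of } M_f\}\cup\{\tilde g(w)-\varepsilon: w\text{ a node of } M_g\}$. $\widetilde M_f$ is obtained from $M_f$ by inserting a degree-two node at every point $x$ with $\tilde f(x)\in H$ not already a node; $\widetilde M_g$ from $M_g$ by inserting degree-two nodes at all points with $\tilde g$-value in $H+\varepsilon$ not already nodes. "Nodes" below refers to nodes of the augmented trees. Let $u_1,\dots,u_{\eta_f}$ be the leaves of $\widetilde M_f$, and $\phi$ assign to each $u_i$ a node $\phi(u_i)$ of $\widetilde M_g$ with $\tilde g(\phi(u_i))=\tilde f(u_i)+\varepsilon$. With $P_i$ the path from $u_i$ to the root of $\widetilde M_f$ and $P_i'$ that from $\phi(u_i)$ to the root of $\widetilde M_g$, $\phi_i:P_i\to P_i'$ sends $x$ to the unique point of $P_i'$ with $\tilde g$-value $\tilde f(x)+\varepsilon$; it is assumed $\phi_i(v)=\phi_j(v)$ for $v=\mathrm{LCA}(u_i,u_j)$ (lowest common ancestor) for all $i\neq j$, so $\varphi(x)=\phi_i(x)$ for $x\in P_i$ is well-defined. $a\succeq b$ means $a$ lies on the upward path from $b$. For the shift map, $\widetilde M_f$ is regarded as extended by an infinite ray above its root on which $\tilde f$ increases to $+\infty$, and $i^{2\varepsilon}(x)$ is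 the unique ancestor of $x$ with $\tilde f$-value $\tilde f(x)+2\varepsilon$. *)

theory Defs
  imports Complex_Main
begin

text \<open>The merge tree as a
topological space is the geometric realisation; its points are represented as
pairs (u, t): the point at height t on the edge from node u to its parent
(with h u \<le> t < h (parent u)), or the root point (root, h root).\<close>

record 'v mtree =
  nodes :: "'v set"
  par   :: "'v \<Rightarrow> 'v"
  rt    :: 'v
  ht    :: "'v \<Rightarrow> real"

definition merge_tree :: "'v mtree \<Rightarrow> bool" where
  "merge_tree T \<longleftrightarrow> finite (nodes T) \<and> rt T \<in> nodes T \<and> par T (rt T) = rt T \<and>
     (\<forall>u\<in>nodes T. u \<noteq> rt T \<longrightarrow> par T u \<in> nodes T \<and> ht T u < ht T (par T u)) \<and>
     (\<forall>u\<in>nodes T. \<exists>n. (par T ^^ n) u = rt T)"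

definition nanc :: "'v mtree \<Rightarrow> 'v \<Rightarrow> 'v \<Rightarrow> bool" where
  "nanc T u w \<longleftrightarrow> (\<exists>n. (par T ^^ n) w = u)"

definition point :: "'v mtree \<Rightarrow> 'v \<times> real \<Rightarrow> bool" where
  "point T p \<longleftrightarrow> fst p \<in> nodes T \<and> ht T (fst p) \<le> snd p \<and>
     (if fst p = rt T then snd p = ht T (fst p) else snd p < ht T (par T (fst p)))"

text \<open>points of the tree extended by an infinite ray above the root\<close>
definition xpoint :: "'v mtree \<Rightarrow> 'v \<times> real \<Rightarrow> bool" where
  "xpoint T p \<longleftrightarrow> fst p \<in> nodes T \<and> ht T (fst p) \<le> snd p \<and>
     (fst p \<noteq> rt T \<longrightarrow> snd p < ht T (par T (fst p)))"

definition above :: "'v mtree \<Rightarrow> 'v \<times> real \<Rightarrow> 'v \<times> real \<Rightarrow> bool" where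
  "above T a b \<longleftrightarrow> nanc T (fst a) (fst b) \<and> snd b \<le> snd a"

definition leaf :: "'v mtree \<Rightarrow> 'v \<times> real \<Rightarrow> bool" where
  "leaf T p \<longleftrightarrow> point T p \<and> (\<forall>q. point T q \<and> above T p q \<longrightarrow> q = p)"

definition aug_node :: "'v mtree \<Rightarrow> real set \<Rightarrow> 'v \<times> real \<Rightarrow> bool" where
  "aug_node T H p \<longleftrightarrow> point T p \<and> (snd p \<in> H \<or> (\<exists>u\<in>nodes T. p = (u, ht T u)))"

definition Hset :: "'v mtree \<Rightarrow> 'w mtree \<Rightarrow> real \<Rightarrow> real set" where
  "Hset f g \<epsilon> = ht f ` nodes f \<union> (\<lambda>x. x - \<epsilon>) ` (ht g ` nodes g)"

definition lca :: "'v mtree \<Rightarrow> 'v \<times> real \<Rightarrow> 'v \<times> real \<Rightarrow> 'v \<times> real" where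
  "lca T a b = (THE c. point T c \<and> above T c a \<and> above T c b \<and>
      (\<forall>d. point T d \<and> above T d a \<and> above T d b \<longrightarrow> above T d c))"

definition path_pt :: "'v mtree \<Rightarrow> 'v \<times> real \<Rightarrow> real \<Rightarrow> 'v \<times> real" where
  "path_pt T p c = (THE y. point T y \<and> above T y p \<and> snd y = c)"

definition varphi :: "'v mtree \<Rightarrow> 'w mtree \<Rightarrow> ('v \<times> real \<Rightarrow> 'w \<times> real) \<Rightarrow> real
    \<Rightarrow> 'v \<times> real \<Rightarrow> 'w \<times> real" where
  "varphi f g \<Phi> \<epsilon> x = path_pt g (\<Phi> (SOME u. leaf f u \<and> above f x u)) (snd x + \<epsilon>)"

definition shift :: "'v mtree \<Rightarrow> real \<Rightarrow> 'v \<times> real \<Rightarrow> 'v \<times> real" where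
  "shift T \<delta> x = (THE y. xpoint T y \<and> above T y x \<and> snd y = snd x + \<delta>)"

definition ancestor_shift :: "'v mtree \<Rightarrow> 'w mtree \<Rightarrow> ('v \<times> real \<Rightarrow> 'w \<times> real) \<Rightarrow> real \<Rightarrow> bool" where
  "ancestor_shift f g \<phi> \<epsilon> \<longleftrightarrow> (\<forall>x1 x2. point f x1 \<and> point f x2 \<and> above g (\<phi> x1) (\<phi> x2)
      \<longrightarrow> above f (shift f (2*\<epsilon>) x1) (shift f (2*\<epsilon>) x2))"

definition twoeps_pair :: "'v mtree \<Rightarrow> real set \<Rightarrow> real \<Rightarrow> 'v \<times> real \<Rightarrow> 'v \<times> real
    \<Rightarrow> 'v \<times> real \<Rightarrow> 'v \<times> real \<Rightarrow> bool" where
  "twoeps_pair f H \<epsilon> ui uj r s \<longleftrightarrow>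
     (let v = lca f ui uj;
          cand = (\<lambda>r s. aug_node f H r \<and> above f r ui \<and> aug_node f H s \<and> above f s uj \<and>
                        snd r = snd s \<and> snd v - snd r > 2*\<epsilon>)
      in cand r s \<and> (\<forall>r' s'. cand r' s' \<longrightarrow> snd r' \<le> snd r))"

end

theory Submission
  imports Defs
begin

text \<open>The hypothesis on least common ancestors makes \<phi> x independent of the leaf below x
used to define it. If \<phi> has the ancestor-shift property and \<phi> r = \<phi> s for the
2\<epsilon>-pair (r, s) of leaves ui, uj, then i^2\<epsilon> r = i^2\<epsilon> s is a common ancestor of ui
and uj strictly below their lca, which is absurd.

Conversely, let \<phi> x1 \<succeq> \<phi> x2, with leaves ui below x1 and uj below x2. If the lca v of
ui and uj is at most 2\<epsilon> above x1, then i^2\<epsilon> x1 lies above v, hence above uj, hence above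
the lower point i^2\<epsilon> x2. Otherwise the 2\<epsilon>-pair (r, s) of (ui, uj) exists. The images of
the two leaf paths merge in g at a point M below \<phi> x1; the height of M minus \<epsilon> is in H
and at most the height of x1, so by maximality of the 2\<epsilon>-pair r and s lie above it, and
there \<phi> maps both paths to the merged one: \<phi> r = \<phi> s.\<close>

lemma nanc_refl: "nanc T a a"
  unfolding nanc_def by (metis funpow_0)

lemma nanc_trans: "nanc T a b \<Longrightarrow> nanc T b c \<Longrightarrow> nanc T a c"
  unfolding nanc_def by (metis funpow_add comp_apply)

lemma nanc_par: "nanc T (par T u) u"
  unfolding nanc_def by (rule exI[of _ 1]) simp

lemma nanc_linear:
  assumes "nanc T a w" "nanc T b w"
  shows "nanc T a b \<or> nanc T b a"
proof -
  obtain m n where m: "(par T ^^ m) w = a" and n: "(par T ^^ n) w = b"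
    using assms unfolding nanc_def by blast
  show ?thesis
  proof (cases "m \<le> n")
    case True
    then have "(par T ^^ (n - m)) a = b"
      using m n by (metis comp_apply funpow_add le_add_diff_inverse2)
    then show ?thesis unfolding nanc_def by blast
  next
    case False
    then have "(par T ^^ (m - n)) b = a"
      using m n by (metis comp_apply funpow_add le_add_diff_inverse2 nat_le_linear)
    then show ?thesis unfolding nanc_def by blast
  qed
qed

lemma nanc_par_if_ne: "nanc T a b \<Longrightarrow> a \<noteq> b \<Longrightarrow> nanc T a (par T b)"
  unfolding nanc_def by (metis funpow_0 funpow_Suc_right comp_apply not0_implies_Suc)

lemma finite_ex_arg_max:
  fixes f :: "'a \<Rightarrow> 'b::linorder"
  assumes "finite A" "A \<noteq> {}"
  shows "\<exists>x\<in>A. \<forall>y\<in>A. f y \<le> f x"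
proof -
  have "Max (f ` A) \<in> f ` A"
    using assms by (intro Max_in) auto
  then obtain x where "x \<in> A" "f x = Max (f ` A)"
    by (metis imageE)
  then show ?thesis
    using assms by (metis Max_ge finite_imageI image_eqI)
qed

lemma finite_ex_arg_min:
  fixes f :: "'a \<Rightarrow> 'b::linorder"
  assumes "finite A" "A \<noteq> {}"
  shows "\<exists>x\<in>A. \<forall>y\<in>A. f x \<le> f y"
  using ex_is_arg_min_if_finite[OF assms, of f] unfolding is_arg_min_linorder by blast

lemma point_fst_in_nodes: "point T p \<Longrightarrow> fst p \<in> nodes T"
  unfolding point_def by blast

lemma point_ht_fst_le: "point T p \<Longrightarrow> ht T (fst p) \<le> snd p"
  unfolding point_def by blast

lemma point_imp_xpoint: "point T p \<Longrightarrow> xpoint T p"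
  unfolding point_def xpoint_def by auto

lemma above_refl: "above T a a"
  unfolding above_def by (simp add: nanc_refl)

lemma above_trans: "above T a b \<Longrightarrow> above T b c \<Longrightarrow> above T a c"
  unfolding above_def by (meson nanc_trans order_trans)

lemma twoeps_pairD:
  assumes "twoeps_pair T H \<epsilon> ui uj r s"
  shows "point T r" "point T s" "above T r ui" "above T s uj" "snd s = snd r"
    and "snd (lca T ui uj) - snd r > 2 * \<epsilon>"
  using assms unfolding twoeps_pair_def aug_node_def Let_def by auto

lemma leaf_point: "leaf T u \<Longrightarrow> point T u"
  unfolding leaf_def by blast

lemma leaf_snd:
  assumes "leaf T u"
  shows "snd u = ht T (fst u)"
proof -
  have "point T u"
    using leaf_point[OF assms] .
  then have "point T (fst u, ht T (fst u))" "above T u (fst u, ht T (fst u))"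
    unfolding point_def above_def by (auto simp: nanc_refl)
  then have "(fst u, ht T (fst u)) = u"
    using assms unfolding leaf_def by blast
  then show ?thesis by (metis snd_conv)
qed

locale finite_merge_tree =
  fixes T :: "'v mtree"
  assumes merge_tree: "merge_tree T"
begin

lemma finite_nodes: "finite (nodes T)"
  using merge_tree unfolding merge_tree_def by blast

lemma root_in_nodes: "rt T \<in> nodes T"
  using merge_tree unfolding merge_tree_def by blast

lemma par_in_nodes: "u \<in> nodes T \<Longrightarrow> par T u \<in> nodes T"
  using merge_tree unfolding merge_tree_def by (cases "u = rt T") auto

lemma ht_less_par: "u \<in> nodes T \<Longrightarrow> u \<noteq> rt T \<Longrightarrow> ht T u < ht T (par T u)"
  using merge_tree unfolding merge_tree_def by auto

lemma funpow_par:
  assumes "b \<in> nodes T"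
  shows "(par T ^^ n) b \<in> nodes T \<and> ((par T ^^ n) b = b \<or> ht T b < ht T ((par T ^^ n) b))"
proof (induction n)
  case (Suc n)
  let ?c = "(par T ^^ n) b"
  show ?case
  proof (cases "?c = rt T")
    case True
    then have "(par T ^^ Suc n) b = ?c"
      using merge_tree unfolding merge_tree_def by simp
    then show ?thesis using Suc by simp
  next
    case False
    then show ?thesis using Suc ht_less_par[of ?c] par_in_nodes[of ?c] by auto
  qed
qed (use assms in simp)

lemma nanc_in_nodes: "nanc T a b \<Longrightarrow> b \<in> nodes T \<Longrightarrow> a \<in> nodes T"
  unfolding nanc_def using funpow_par by blast

lemma nanc_ht_less: "nanc T a b \<Longrightarrow> b \<in> nodes T \<Longrightarrow> a \<noteq> b \<Longrightarrow> ht T b < ht T a"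
  unfolding nanc_def using funpow_par by blast

lemma nanc_ht_le: "nanc T a b \<Longrightarrow> b \<in> nodes T \<Longrightarrow> ht T b \<le> ht T a"
  using nanc_ht_less by fastforce

lemma nanc_antisym: "nanc T a b \<Longrightarrow> nanc T b a \<Longrightarrow> b \<in> nodes T \<Longrightarrow> a = b"
  by (metis nanc_ht_less nanc_in_nodes order.asym)

lemma nanc_rootD: "nanc T a (rt T) \<Longrightarrow> a = rt T"
proof -
  have "(par T ^^ n) (rt T) = rt T" for n
    using merge_tree by (induction n) (auto simp: merge_tree_def)
  then show "nanc T a (rt T) \<Longrightarrow> a = rt T"
    unfolding nanc_def by metis
qed

lemma nanc_root: "u \<in> nodes T \<Longrightarrow> nanc T (rt T) u"
  using merge_tree unfolding nanc_def merge_tree_def by blast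

lemma point_node: "w \<in> nodes T \<Longrightarrow> point T (w, ht T w)"
  unfolding point_def using ht_less_par by simp

lemma point_ht_le_root:
  assumes "point T p"
  shows "snd p \<le> ht T (rt T)"
proof (cases "fst p = rt T")
  case False
  then have "snd p < ht T (par T (fst p))" "par T (fst p) \<in> nodes T"
    using assms par_in_nodes unfolding point_def by auto
  then show ?thesis
    using nanc_ht_le[OF nanc_root] by fastforce
qed (use assms in \<open>simp add: point_def\<close>)

lemma point_iff_xpoint: "point T p \<longleftrightarrow> xpoint T p \<and> snd p \<le> ht T (rt T)"
proof
  show "point T p \<Longrightarrow> xpoint T p \<and> snd p \<le> ht T (rt T)"
    using point_imp_xpoint point_ht_le_root by blast
qed (auto simp: point_def xpoint_def)

lemma above_antisym: "xpoint T a \<Longrightarrow> above T a b \<Longrightarrow> above T b a \<Longrightarrow> a = b"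
  unfolding above_def xpoint_def by (metis nanc_antisym order.antisym prod.expand)

text \<open>If fst a were a proper ancestor of fst b, then snd a \<ge> ht (par (fst b)) > snd b.\<close>

lemma above_by_height:
  assumes a: "xpoint T a" and b: "xpoint T b" and "above T a p" "above T b p"
    and le: "snd a \<le> snd b"
  shows "above T b a"
proof -
  have "nanc T (fst b) (fst a)"
  proof (rule ccontr)
    assume not_ba: "\<not> nanc T (fst b) (fst a)"
    then have ab: "nanc T (fst a) (fst b)" and ne: "fst a \<noteq> fst b"
      using nanc_linear[of T "fst a" "fst p" "fst b"] \<open>above T a p\<close> \<open>above T b p\<close> nanc_refl
      unfolding above_def by auto
    have "fst b \<noteq> rt T"
      using ab ne nanc_rootD by metis
    then have "snd b < ht T (par T (fst b))"
      using b unfolding xpoint_def by blast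
    also have "\<dots> \<le> ht T (fst a)"
      using nanc_ht_le[OF nanc_par_if_ne[OF ab ne]] b par_in_nodes unfolding xpoint_def by blast
    also have "\<dots> \<le> snd a"
      using a unfolding xpoint_def by blast
    finally show False using le by simp
  qed
  then show ?thesis unfolding above_def using le by simp
qed

lemma snd_less_ht_par:
  assumes a: "point T a" and wa: "nanc T w (fst a)" and wr: "w \<noteq> rt T"
  shows "snd a < ht T (par T w)"
proof -
  have an: "fst a \<in> nodes T" and "fst a \<noteq> rt T"
    using a wa wr nanc_rootD unfolding point_def by auto
  then have "snd a < ht T (par T (fst a))"
    using a unfolding point_def by simp
  also have "\<dots> \<le> ht T (par T w)"
  proof (cases "w = fst a")
    case False
    have "ht T (par T (fst a)) \<le> ht T w"
      using nanc_ht_le[OF nanc_par_if_ne[OF wa False]] par_in_nodes[OF an] .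
    also have "\<dots> < ht T (par T w)"
      using ht_less_par[OF nanc_in_nodes[OF wa an] wr] .
    finally show ?thesis by simp
  qed simp
  finally show ?thesis .
qed

text \<open>The witness sits on the highest ancestor of fst p whose height is at most c.\<close>

lemma ex_xpoint_above:
  assumes p: "xpoint T p" and pc: "snd p \<le> c"
  shows "\<exists>y. xpoint T y \<and> above T y p \<and> snd y = c"
proof -
  define A where "A = {w \<in> nodes T. nanc T w (fst p) \<and> ht T w \<le> c}"
  have "finite A"
    using finite_nodes unfolding A_def by simp
  moreover have "fst p \<in> A"
    using p pc unfolding A_def xpoint_def by (simp add: nanc_refl)
  ultimately obtain w where wA: "w \<in> A" and wmax: "\<And>w'. w' \<in> A \<Longrightarrow> ht T w' \<le> ht T w"
    using finite_ex_arg_max[of A "ht T"] by blast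
  have w: "w \<in> nodes T" "nanc T w (fst p)" "ht T w \<le> c"
    using wA unfolding A_def by auto
  have "c < ht T (par T w)" if "w \<noteq> rt T"
  proof (rule ccontr)
    assume "\<not> c < ht T (par T w)"
    then have "par T w \<in> A"
      using w par_in_nodes nanc_trans[OF nanc_par] unfolding A_def by auto
    then show False
      using wmax ht_less_par[OF w(1) that] by fastforce
  qed
  then have "xpoint T (w, c)"
    using w unfolding xpoint_def by simp
  moreover have "above T (w, c) p"
    using w pc unfolding above_def by simp
  ultimately show ?thesis by fastforce
qed

lemma path_pt_eq:
  assumes "point T y" "above T y p" "snd y = c"
  shows "path_pt T p c = y"
  unfolding path_pt_def
proof (rule the_equality)
  fix y' assume "point T y' \<and> above T y' p \<and> snd y' = c"
  then have y': "xpoint T y'" "above T y' p" "snd y' = c"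
    using point_imp_xpoint by blast+
  have "above T y y'" "above T y' y"
    using above_by_height[OF y'(1) point_imp_xpoint[OF assms(1)] y'(2) assms(2)]
      above_by_height[OF point_imp_xpoint[OF assms(1)] y'(1) assms(2) y'(2)] y'(3) assms(3)
    by simp_all
  then show "y' = y"
    using above_antisym[OF point_imp_xpoint[OF assms(1)]] by metis
qed (use assms in blast)

lemma path_pt:
  assumes "point T p" "snd p \<le> c" "c \<le> ht T (rt T)"
  shows "point T (path_pt T p c)" "above T (path_pt T p c) p" "snd (path_pt T p c) = c"
proof -
  obtain y where "xpoint T y" "above T y p" "snd y = c"
    using ex_xpoint_above assms point_imp_xpoint by blast
  moreover from this have "point T y"
    using assms point_iff_xpoint by simp
  ultimately show "point T (path_pt T p c)" "above T (path_pt T p c) p" "snd (path_pt T p c) = c"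
    using path_pt_eq by simp_all
qed

lemma path_pt_path_pt:
  assumes "point T p" "snd p \<le> c" "c \<le> d" "d \<le> ht T (rt T)"
  shows "path_pt T (path_pt T p c) d = path_pt T p d"
proof -
  have c: "point T (path_pt T p c)" "above T (path_pt T p c) p" "snd (path_pt T p c) = c"
    using path_pt assms by auto
  have d: "point T (path_pt T (path_pt T p c) d)"
    "above T (path_pt T (path_pt T p c) d) (path_pt T p c)" "snd (path_pt T (path_pt T p c) d) = d"
    using path_pt[OF c(1)] c(3) assms(3,4) by auto
  show ?thesis
    using path_pt_eq[OF d(1) above_trans[OF d(2) c(2)] d(3)] by simp
qed

lemma path_pt_eq_above:
  assumes "point T a" "point T b" "snd a \<le> c" "snd b \<le> c" "c \<le> d" "d \<le> ht T (rt T)"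
    and "path_pt T a c = path_pt T b c"
  shows "path_pt T a d = path_pt T b d"
  using path_pt_path_pt[of a c d] path_pt_path_pt[of b c d] assms by simp

lemma shift_eq:
  assumes "xpoint T y" "above T y x" "snd y = snd x + \<delta>"
  shows "shift T \<delta> x = y"
  unfolding shift_def
proof (rule the_equality)
  fix y' assume "xpoint T y' \<and> above T y' x \<and> snd y' = snd x + \<delta>"
  then have y': "xpoint T y'" "above T y' x" "snd y' = snd x + \<delta>"
    by blast+
  have "above T y y'" "above T y' y"
    using above_by_height[OF y'(1) assms(1) y'(2) assms(2)]
      above_by_height[OF assms(1) y'(1) assms(2) y'(2)] y'(3) assms(3)
    by simp_all
  then show "y' = y"
    using above_antisym[OF assms(1)] by metis
qed (use assms in blast)

lemma shift:
  assumes "xpoint T x" "0 \<le> \<delta>"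
  shows "xpoint T (shift T \<delta> x)" "above T (shift T \<delta> x) x" "snd (shift T \<delta> x) = snd x + \<delta>"
proof -
  obtain y where "xpoint T y" "above T y x" "snd y = snd x + \<delta>"
    using ex_xpoint_above[OF assms(1), of "snd x + \<delta>"] assms(2) by auto
  then show "xpoint T (shift T \<delta> x)" "above T (shift T \<delta> x) x" "snd (shift T \<delta> x) = snd x + \<delta>"
    using shift_eq by simp_all
qed

text \<open>A descendant node of minimal height has no children, so its base point is a leaf.\<close>

lemma ex_leaf_below:
  assumes x: "point T x"
  shows "\<exists>u. leaf T u \<and> above T x u"
proof -
  define A where "A = {w \<in> nodes T. nanc T (fst x) w}"
  have "finite A"
    using finite_nodes unfolding A_def by simp
  moreover have "fst x \<in> A"
    using point_fst_in_nodes[OF x] unfolding A_def by (simp add: nanc_refl)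
  ultimately obtain w where wA: "w \<in> A" and wmin: "\<And>w'. w' \<in> A \<Longrightarrow> ht T w \<le> ht T w'"
    using finite_ex_arg_min[of A "ht T"] by blast
  have w: "w \<in> nodes T" "nanc T (fst x) w"
    using wA unfolding A_def by auto
  have "q = (w, ht T w)" if q: "point T q" "above T (w, ht T w) q" for q
  proof -
    have qw: "nanc T w (fst q)" "snd q \<le> ht T w"
      using q(2) unfolding above_def by simp_all
    have "fst q \<in> A"
      using point_fst_in_nodes[OF q(1)] nanc_trans[OF w(2) qw(1)] unfolding A_def by blast
    then have "ht T w \<le> ht T (fst q)"
      by (rule wmin)
    then have "fst q = w"
      using nanc_ht_less[OF qw(1) point_fst_in_nodes[OF q(1)]] by (cases "w = fst q") auto
    then show ?thesis
      using qw(2) point_ht_fst_le[OF q(1)] by (simp add: prod_eq_iff)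
  qed
  then have "leaf T (w, ht T w)"
    using point_node[OF w(1)] unfolding leaf_def by blast
  moreover have "above T x (w, ht T w)"
    using w(2) nanc_ht_le[OF w(2) w(1)] point_ht_fst_le[OF x] unfolding above_def by simp
  ultimately show ?thesis by blast
qed

text \<open>The least common ancestor sits on the lowest common ancestor node w of fst a and
fst b, at height max (ht w) (max (snd a) (snd b)).\<close>

lemma lca_candidate:
  assumes a: "point T a" and b: "point T b"
  obtains c where "point T c" "above T c a" "above T c b"
    and "\<And>d. point T d \<Longrightarrow> above T d a \<Longrightarrow> above T d b \<Longrightarrow> above T d c"
    and "snd c \<in> insert (snd a) (insert (snd b) (ht T ` nodes T))"
proof -
  define N where "N = {w \<in> nodes T. nanc T w (fst a) \<and> nanc T w (fst b)}"
  have "finite N"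
    using finite_nodes unfolding N_def by simp
  moreover have "rt T \<in> N"
    using root_in_nodes nanc_root point_fst_in_nodes[OF a] point_fst_in_nodes[OF b]
    unfolding N_def by simp
  ultimately obtain w where wN: "w \<in> N" and wmin: "\<And>w'. w' \<in> N \<Longrightarrow> ht T w \<le> ht T w'"
    using finite_ex_arg_min[of N "ht T"] by blast
  have w: "w \<in> nodes T" "nanc T w (fst a)" "nanc T w (fst b)"
    using wN unfolding N_def by auto
  define c where "c = (w, max (ht T w) (max (snd a) (snd b)))"
  have "point T c"
  proof (cases "w = rt T")
    case True
    then show ?thesis
      using w(1) point_ht_le_root[OF a] point_ht_le_root[OF b] unfolding c_def point_def by simp
  next
    case False
    then show ?thesis
      using w(1) ht_less_par[OF w(1) False] snd_less_ht_par[OF a w(2) False]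
        snd_less_ht_par[OF b w(3) False]
      unfolding c_def point_def by simp
  qed
  moreover have "above T c a" "above T c b"
    using w unfolding c_def above_def by auto
  moreover have "above T d c" if d: "point T d" "above T d a" "above T d b" for d
  proof -
    have da: "nanc T (fst d) (fst a)" "nanc T (fst d) (fst b)"
      using d(2,3) unfolding above_def by simp_all
    then have "fst d \<in> N"
      using point_fst_in_nodes[OF d(1)] unfolding N_def by simp
    then have "ht T w \<le> ht T (fst d)"
      by (rule wmin)
    moreover have "nanc T (fst d) w \<or> nanc T w (fst d)"
      using nanc_linear[OF da(1) w(2)] .
    ultimately have "nanc T (fst d) w"
      using nanc_ht_less[of w "fst d"] point_fst_in_nodes[OF d(1)] nanc_refl
      by (cases "w = fst d") auto
    moreover have "ht T (fst d) \<le> snd d"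
      by (rule point_ht_fst_le[OF d(1)])
    ultimately show ?thesis
      using d(2,3) \<open>ht T w \<le> ht T (fst d)\<close> unfolding c_def above_def by simp
  qed
  moreover have "snd c \<in> insert (snd a) (insert (snd b) (ht T ` nodes T))"
    using w(1) unfolding c_def max_def by simp
  ultimately show ?thesis
    using that by blast
qed

lemma lca:
  assumes "point T a" "point T b"
  shows "point T (lca T a b)" "above T (lca T a b) a" "above T (lca T a b) b"
    and "\<And>d. point T d \<Longrightarrow> above T d a \<Longrightarrow> above T d b \<Longrightarrow> above T d (lca T a b)"
    and "snd (lca T a b) \<in> insert (snd a) (insert (snd b) (ht T ` nodes T))"
proof -
  obtain c where c: "point T c" "above T c a" "above T c b"
    "\<And>d. point T d \<Longrightarrow> above T d a \<Longrightarrow> above T d b \<Longrightarrow> above T d c"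
    "snd c \<in> insert (snd a) (insert (snd b) (ht T ` nodes T))"
    using lca_candidate[OF assms] by blast
  have "lca T a b = c"
    unfolding lca_def
  proof (rule the_equality)
    fix x
    assume x: "point T x \<and> above T x a \<and> above T x b \<and>
      (\<forall>d. point T d \<and> above T d a \<and> above T d b \<longrightarrow> above T d x)"
    then have "above T c x" "above T x c"
      using c by blast+
    then show "x = c"
      using above_antisym[OF point_imp_xpoint[OF c(1)]] by metis
  qed (use c in blast)
  then show "point T (lca T a b)" "above T (lca T a b) a" "above T (lca T a b) b"
    "\<And>d. point T d \<Longrightarrow> above T d a \<Longrightarrow> above T d b \<Longrightarrow> above T d (lca T a b)"
    "snd (lca T a b) \<in> insert (snd a) (insert (snd b) (ht T ` nodes T))"
    using c by simp_all
qed

lemma lca_self: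
  assumes "point T u"
  shows "lca T u u = u"
  using above_antisym[OF point_imp_xpoint[OF assms] lca(4)[OF assms assms assms above_refl above_refl]]
    lca(2)[OF assms assms] by simp

lemma path_pt_above_lca:
  assumes "point T a" "point T b" "snd (lca T a b) \<le> c" "c \<le> ht T (rt T)"
  shows "path_pt T a c = path_pt T b c"
proof -
  let ?m = "lca T a b"
  have m: "point T (path_pt T ?m c)" "above T (path_pt T ?m c) ?m" "snd (path_pt T ?m c) = c"
    using path_pt lca(1) assms by auto
  have "path_pt T a c = path_pt T ?m c"
    using path_pt_eq[OF m(1) above_trans[OF m(2) lca(2)[OF assms(1,2)]] m(3)] .
  moreover have "path_pt T b c = path_pt T ?m c"
    using path_pt_eq[OF m(1) above_trans[OF m(2) lca(3)[OF assms(1,2)]] m(3)] .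
  ultimately show ?thesis by simp
qed

lemma above_if_above_lca:
  assumes "xpoint T a" "xpoint T b" "point T p" "point T q" "above T a p" "above T b q"
    and "snd (lca T p q) \<le> snd a" "snd b \<le> snd a"
  shows "above T a b"
proof -
  have "above T a (lca T p q)"
    using above_by_height[of "lca T p q" a p] lca[OF assms(3,4)] assms point_imp_xpoint by blast
  then have "above T a q"
    using above_trans lca(3)[OF assms(3,4)] by blast
  then show ?thesis
    using above_by_height[of b a q] assms by blast
qed

lemma shift_above_shift:
  assumes "point T x1" "point T x2" "point T ui" "point T uj" "above T x1 ui" "above T x2 uj"
    and "snd x2 \<le> snd x1" "0 \<le> \<delta>" "snd (lca T ui uj) \<le> snd x1 + \<delta>"
  shows "above T (shift T \<delta> x1) (shift T \<delta> x2)"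
proof -
  note y1 = shift[OF point_imp_xpoint[OF assms(1)] assms(8)]
    and y2 = shift[OF point_imp_xpoint[OF assms(2)] assms(8)]
  show ?thesis
    using above_if_above_lca[OF y1(1) y2(1) assms(3,4)
        above_trans[OF y1(2) assms(5)] above_trans[OF y2(2) assms(6)]]
      y1(3) y2(3) assms(7,9) by simp
qed

lemma twoeps_pair_max:
  assumes "twoeps_pair T H \<epsilon> ui uj r s" "point T ui" "point T uj" "0 \<le> \<epsilon>"
    and "t \<in> H" "snd ui \<le> t" "snd uj \<le> t" "t + 2 * \<epsilon> < snd (lca T ui uj)"
  shows "t \<le> snd r"
proof -
  have "t \<le> ht T (rt T)"
    using assms point_ht_le_root[OF lca(1)[OF assms(2,3)]] by linarith
  then have "aug_node T H (path_pt T ui t) \<and> above T (path_pt T ui t) ui \<and>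
      aug_node T H (path_pt T uj t) \<and> above T (path_pt T uj t) uj \<and>
      snd (path_pt T ui t) = snd (path_pt T uj t) \<and> snd (lca T ui uj) - snd (path_pt T ui t) > 2 * \<epsilon>"
    using path_pt assms unfolding aug_node_def by auto
  then have "snd (path_pt T ui t) \<le> snd r"
    using assms(1) unfolding twoeps_pair_def Let_def by blast
  then show ?thesis
    using path_pt(3) assms \<open>t \<le> ht T (rt T)\<close> by simp
qed

text \<open>The 2\<epsilon>-pair lies at the largest height of H below the lca by more than 2\<epsilon>;
the leaf heights guarantee that there is one.\<close>

lemma twoeps_pair_exists:
  assumes "finite H" "ht T ` nodes T \<subseteq> H" "leaf T ui" "leaf T uj" "0 \<le> \<epsilon>"
    and "max (snd ui) (snd uj) + 2 * \<epsilon> < snd (lca T ui uj)"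
  obtains r s where "twoeps_pair T H \<epsilon> ui uj r s"
proof -
  have ui: "point T ui" and uj: "point T uj"
    using assms(3,4) leaf_point by blast+
  define K where "K = {t \<in> H. max (snd ui) (snd uj) \<le> t \<and> t + 2 * \<epsilon> < snd (lca T ui uj)}"
  have "max (snd ui) (snd uj) \<in> H"
    using assms(2) leaf_snd[OF assms(3)] leaf_snd[OF assms(4)] ui uj
    unfolding point_def max_def by auto
  then have "max (snd ui) (snd uj) \<in> K"
    using assms(6) unfolding K_def by simp
  then have "K \<noteq> {}"
    by blast
  have "finite K"
    using assms(1) unfolding K_def by simp
  define t where "t = Max K"
  have t: "t \<in> H" "max (snd ui) (snd uj) \<le> t" "t + 2 * \<epsilon> < snd (lca T ui uj)"
    using Max_in[OF \<open>finite K\<close> \<open>K \<noteq> {}\<close>] unfolding t_def K_def by auto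
  have "t \<le> ht T (rt T)"
    using t assms point_ht_le_root[OF lca(1)[OF ui uj]] by linarith
  then have r: "point T (path_pt T ui t)" "above T (path_pt T ui t) ui" "snd (path_pt T ui t) = t"
    and s: "point T (path_pt T uj t)" "above T (path_pt T uj t) uj" "snd (path_pt T uj t) = t"
    using path_pt ui uj t by auto
  have t_max: "snd r' \<le> t" if "aug_node T H r'" "above T r' ui" "aug_node T H s'" "above T s' uj"
    "snd r' = snd s'" "snd (lca T ui uj) - snd r' > 2 * \<epsilon>" for r' s'
  proof -
    have "snd r' \<in> K"
      using that assms(2) unfolding aug_node_def above_def K_def by auto
    then show ?thesis
      unfolding t_def using \<open>finite K\<close> by simp
  qed
  have "twoeps_pair T H \<epsilon> ui uj (path_pt T ui t) (path_pt T uj t)"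
    unfolding twoeps_pair_def Let_def
  proof (intro conjI allI impI)
    fix r' s'
    assume "aug_node T H r' \<and> above T r' ui \<and> aug_node T H s' \<and> above T s' uj \<and>
      snd r' = snd s' \<and> snd (lca T ui uj) - snd r' > 2 * \<epsilon>"
    then have "snd r' \<le> t"
      using t_max by blast
    then show "snd r' \<le> snd (path_pt T ui t)"
      using r(3) by simp
  qed (use r s t in \<open>auto simp: aug_node_def\<close>)
  then show ?thesis by (rule that)
qed

lemma ancestor_shift_twoeps_pair_neq:
  assumes "ancestor_shift T T' \<phi> \<epsilon>" "0 \<le> \<epsilon>" "point T ui" "point T uj"
    and "twoeps_pair T H \<epsilon> ui uj r s"
  shows "\<phi> r \<noteq> \<phi> s"
proof
  assume eq: "\<phi> r = \<phi> s"
  note rs = twoeps_pairD[OF assms(5)]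
  let ?y = "shift T (2 * \<epsilon>) r"
  have y: "xpoint T ?y" "above T ?y r" "snd ?y = snd r + 2 * \<epsilon>"
    using shift[OF point_imp_xpoint[OF rs(1)]] assms(2) by simp_all
  have "above T ?y (shift T (2 * \<epsilon>) s)" "above T (shift T (2 * \<epsilon>) s) ?y"
    using assms(1) rs(1,2) eq above_refl unfolding ancestor_shift_def by metis+
  then have "?y = shift T (2 * \<epsilon>) s"
    using above_antisym y(1) by blast
  moreover have "above T (shift T (2 * \<epsilon>) s) s"
    using shift(2)[OF point_imp_xpoint[OF rs(2)]] assms(2) by simp
  ultimately have "above T ?y uj"
    using above_trans[OF _ rs(4)] by simp
  moreover have "above T ?y ui"
    using above_trans[OF y(2) rs(3)] .
  moreover have "point T ?y"
    using y rs(6) point_ht_le_root[OF lca(1)[OF assms(3,4)]] point_iff_xpoint by auto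
  ultimately have "above T ?y (lca T ui uj)"
    using lca(4)[OF assms(3,4)] by blast
  then show False
    using y rs(6) unfolding above_def by simp
qed

end

locale leaf_assignment = F: finite_merge_tree f + G: finite_merge_tree g
  for f :: "'v mtree" and g :: "'w mtree" +
  fixes \<epsilon> :: real and \<Phi> :: "'v \<times> real \<Rightarrow> 'w \<times> real"
  assumes eps_pos: "\<epsilon> > 0"
    and root_ht: "ht g (rt g) = ht f (rt f) + \<epsilon>"
    and point_\<Phi>: "\<And>u. leaf f u \<Longrightarrow> point g (\<Phi> u)"
    and snd_\<Phi>: "\<And>u. leaf f u \<Longrightarrow> snd (\<Phi> u) = snd u + \<epsilon>"
    and \<Phi>_paths_agree: "\<And>ui uj. leaf f ui \<Longrightarrow> leaf f uj \<Longrightarrow> ui \<noteq> uj \<Longrightarrow>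
      path_pt g (\<Phi> ui) (snd (lca f ui uj) + \<epsilon>) = path_pt g (\<Phi> uj) (snd (lca f ui uj) + \<epsilon>)"
begin

abbreviation \<phi> where "\<phi> \<equiv> varphi f g \<Phi> \<epsilon>"

lemma finite_Hset: "finite (Hset f g \<epsilon>)"
  unfolding Hset_def using F.finite_nodes G.finite_nodes by simp

lemma path_pt_\<Phi>_bounds:
  assumes "point f x" "leaf f u" "above f x u"
  shows "snd (\<Phi> u) \<le> snd x + \<epsilon>" "snd x + \<epsilon> \<le> ht g (rt g)"
proof -
  have "snd u \<le> snd x"
    using assms(3) unfolding above_def by simp
  then show "snd (\<Phi> u) \<le> snd x + \<epsilon>"
    using snd_\<Phi>[OF assms(2)] by simp
  show "snd x + \<epsilon> \<le> ht g (rt g)"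
    using F.point_ht_le_root[OF assms(1)] root_ht by simp
qed

text \<open>Two leaves below x have their lca below x, where their image paths in g already
agree; so the leaf picked by SOME in varphi is irrelevant.\<close>

lemma varphi_eq:
  assumes x: "point f x" and u: "leaf f u" and xu: "above f x u"
  shows "\<phi> x = path_pt g (\<Phi> u) (snd x + \<epsilon>)"
proof -
  define u' where "u' = (SOME u. leaf f u \<and> above f x u)"
  have u': "leaf f u'" "above f x u'"
    using someI_ex[OF F.ex_leaf_below[OF x]] unfolding u'_def by blast+
  have \<phi>x: "\<phi> x = path_pt g (\<Phi> u') (snd x + \<epsilon>)"
    unfolding varphi_def u'_def by simp
  show ?thesis
  proof (cases "u' = u")
    case False
    let ?v = "lca f u' u"
    note v = F.lca[OF leaf_point[OF u'(1)] leaf_point[OF u]]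
    have "above f x ?v"
      using v(4)[OF x u'(2) xu] .
    then have "snd ?v \<le> snd x"
      unfolding above_def by simp
    then have "snd ?v + \<epsilon> \<le> snd x + \<epsilon>"
      by simp
    then have "path_pt g (\<Phi> u') (snd x + \<epsilon>) = path_pt g (\<Phi> u) (snd x + \<epsilon>)"
      using G.path_pt_eq_above[OF point_\<Phi>[OF u'(1)] point_\<Phi>[OF u]
          path_pt_\<Phi>_bounds(1)[OF v(1) u'(1) v(2)] path_pt_\<Phi>_bounds(1)[OF v(1) u v(3)] _
          path_pt_\<Phi>_bounds(2)[OF x u xu] \<Phi>_paths_agree[OF u'(1) u False]]
      by blast
    then show ?thesis
      using \<phi>x by simp
  qed (use \<phi>x in simp)
qed

lemma varphi:
  assumes "point f x" "leaf f u" "above f x u"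
  shows "point g (\<phi> x)" "above g (\<phi> x) (\<Phi> u)" "snd (\<phi> x) = snd x + \<epsilon>"
  using varphi_eq[OF assms] G.path_pt[OF point_\<Phi>[OF assms(2)]] path_pt_\<Phi>_bounds[OF assms]
  by simp_all

lemma varphi_twoeps_pair_eq:
  assumes ui: "leaf f ui" and uj: "leaf f uj"
    and rs: "twoeps_pair f (Hset f g \<epsilon>) \<epsilon> ui uj r s"
    and low: "snd (lca g (\<Phi> ui) (\<Phi> uj)) + \<epsilon> < snd (lca f ui uj)"
  shows "\<phi> r = \<phi> s"
proof -
  let ?M = "lca g (\<Phi> ui) (\<Phi> uj)"
  note r = twoeps_pairD[OF rs]
  note M = G.lca[OF point_\<Phi>[OF ui] point_\<Phi>[OF uj]]
  have "snd ?M - \<epsilon> \<in> Hset f g \<epsilon>"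
    using M(5) snd_\<Phi>[OF ui] snd_\<Phi>[OF uj] leaf_snd[OF ui] leaf_snd[OF uj]
      leaf_point[OF ui, THEN point_fst_in_nodes] leaf_point[OF uj, THEN point_fst_in_nodes]
    unfolding Hset_def by auto
  moreover have "snd ui \<le> snd ?M - \<epsilon>" "snd uj \<le> snd ?M - \<epsilon>"
    using M(2,3) snd_\<Phi>[OF ui] snd_\<Phi>[OF uj] unfolding above_def by simp_all
  ultimately have "snd ?M - \<epsilon> \<le> snd r"
    using F.twoeps_pair_max[OF rs leaf_point[OF ui] leaf_point[OF uj]] eps_pos low by simp
  then have "path_pt g (\<Phi> ui) (snd r + \<epsilon>) = path_pt g (\<Phi> uj) (snd r + \<epsilon>)"
    using G.path_pt_above_lca[OF point_\<Phi>[OF ui] point_\<Phi>[OF uj]] F.point_ht_le_root[OF r(1)] root_ht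
    by simp
  then show ?thesis
    using varphi_eq[OF r(1) ui r(3)] varphi_eq[OF r(2) uj r(4)] r(5) by simp
qed

lemma ancestor_shift_if_twoeps_pairs_separated:
  assumes sep: "\<And>ui uj r s. leaf f ui \<Longrightarrow> leaf f uj \<Longrightarrow> ui \<noteq> uj \<Longrightarrow>
      twoeps_pair f (Hset f g \<epsilon>) \<epsilon> ui uj r s \<Longrightarrow> \<phi> r \<noteq> \<phi> s"
  shows "ancestor_shift f g \<phi> \<epsilon>"
  unfolding ancestor_shift_def
proof (intro allI impI)
  fix x1 x2
  assume "point f x1 \<and> point f x2 \<and> above g (\<phi> x1) (\<phi> x2)"
  then have x1: "point f x1" and x2: "point f x2" and x12: "above g (\<phi> x1) (\<phi> x2)"
    by blast+
  obtain ui where ui: "leaf f ui" "above f x1 ui"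
    using F.ex_leaf_below[OF x1] by blast
  obtain uj where uj: "leaf f uj" "above f x2 uj"
    using F.ex_leaf_below[OF x2] by blast
  note pui = leaf_point[OF ui(1)] and puj = leaf_point[OF uj(1)]
  note \<phi>1 = varphi[OF x1 ui] and \<phi>2 = varphi[OF x2 uj]
  have heights: "snd x2 \<le> snd x1" "snd ui \<le> snd x1" "snd uj \<le> snd x1"
    using x12 ui(2) uj(2) \<phi>1(3) \<phi>2(3) unfolding above_def by auto
  show "above f (shift f (2 * \<epsilon>) x1) (shift f (2 * \<epsilon>) x2)"
  proof (rule ccontr)
    assume not_above: "\<not> above f (shift f (2 * \<epsilon>) x1) (shift f (2 * \<epsilon>) x2)"
    let ?v = "lca f ui uj"
    have high: "snd x1 + 2 * \<epsilon> < snd ?v"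
      using F.shift_above_shift[OF x1 x2 pui puj ui(2) uj(2) heights(1), of "2 * \<epsilon>"] not_above eps_pos
      by fastforce
    have "ui \<noteq> uj"
      using high heights F.lca_self[OF pui] eps_pos by auto
    have "ht f ` nodes f \<subseteq> Hset f g \<epsilon>"
      unfolding Hset_def by blast
    moreover have "max (snd ui) (snd uj) + 2 * \<epsilon> < snd ?v"
      using high heights by simp
    ultimately obtain r s where rs: "twoeps_pair f (Hset f g \<epsilon>) \<epsilon> ui uj r s"
      using F.twoeps_pair_exists[OF finite_Hset _ ui(1) uj(1)] eps_pos by (meson less_imp_le)
    have "above g (\<phi> x1) (lca g (\<Phi> ui) (\<Phi> uj))"
      using G.lca(4)[OF point_\<Phi>[OF ui(1)] point_\<Phi>[OF uj(1)] \<phi>1(1,2) above_trans[OF x12 \<phi>2(2)]] .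
    then have "snd (lca g (\<Phi> ui) (\<Phi> uj)) + \<epsilon> < snd ?v"
      using \<phi>1(3) high unfolding above_def by simp
    then have "\<phi> r = \<phi> s"
      by (rule varphi_twoeps_pair_eq[OF ui(1) uj(1) rs])
    with sep[OF ui(1) uj(1) \<open>ui \<noteq> uj\<close> rs] show False ..
  qed
qed

end

theorem theorem4p8:
  fixes f :: "'v mtree" and g :: "'w mtree" and \<epsilon> :: real
    and \<Phi> :: "'v \<times> real \<Rightarrow> 'w \<times> real"
  assumes "\<epsilon> > 0"
    and "merge_tree f" and "merge_tree g"
    and "ht g (rt g) = ht f (rt f) + \<epsilon>"
    and "\<forall>u. leaf f u \<longrightarrow>
           aug_node g ((\<lambda>x. x + \<epsilon>) ` Hset f g \<epsilon>) (\<Phi> u) \<and> snd (\<Phi> u) = snd u + \<epsilon>"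
    and "\<forall>ui uj. leaf f ui \<and> leaf f uj \<and> ui \<noteq> uj \<longrightarrow>
           path_pt g (\<Phi> ui) (snd (lca f ui uj) + \<epsilon>) = path_pt g (\<Phi> uj) (snd (lca f ui uj) + \<epsilon>)"
  shows "ancestor_shift f g (varphi f g \<Phi> \<epsilon>) \<epsilon> \<longleftrightarrow>
    (\<forall>ui uj r s. leaf f ui \<and> leaf f uj \<and> ui \<noteq> uj \<and> twoeps_pair f (Hset f g \<epsilon>) \<epsilon> ui uj r s
        \<longrightarrow> varphi f g \<Phi> \<epsilon> r \<noteq> varphi f g \<Phi> \<epsilon> s)"
proof -
  interpret leaf_assignment f g \<epsilon> \<Phi>
    by (unfold_locales; use assms[unfolded aug_node_def] in blast)
  show ?thesis
  proof
    assume "ancestor_shift f g \<phi> \<epsilon>"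
    then show "\<forall>ui uj r s. leaf f ui \<and> leaf f uj \<and> ui \<noteq> uj \<and>
        twoeps_pair f (Hset f g \<epsilon>) \<epsilon> ui uj r s \<longrightarrow> \<phi> r \<noteq> \<phi> s"
      using F.ancestor_shift_twoeps_pair_neq[OF _ less_imp_le[OF eps_pos] leaf_point leaf_point]
      by blast
  qed (use ancestor_shift_if_twoeps_pairs_separated in blast)
qed

end
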